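(* For every integer $l\ge0$ there is a constant $C_l$, depending only on $l,N,r,R$ (and the choice of $\varphi_1$), such that for all integers $k\ge0$ and all $n\in\mathbb{Z}^N$, $$\sum_{j\in\mathbb{Z},\ k\le\sqrt{j}<k+1}|(\Theta_j)_n|^2\le\frac{C_l}{(1+||n|-k|)^l}.$$
   Context: Let $N\ge2$ and $0<r<R\le\pi$. $T^N=(-\pi,\pi]^N$, and functions on $T^N$ are identified with $2\pi$-periodic functions on $\mathbb{R}^N$. Let $\varphi_1:[0,\infty)\to\mathbb{R}$ be a smooth function with $\chi_{(R-r)/3}\le\varphi_1\le\chi_{2(R-r)/3}$, where $\chi_b$ is the characteristic function of $[0,b]$. Put $\varphi_2=1-\varphi_1$, and let $\psi(x)=\varphi_2(|x|)$ for $x\in T^N$, extended $2\pi$-periodically in each variable. Let $\psi_m=(2\pi)^{-N}\int_{T^N}\psi(x)e^{-imx}dx$ be its Fourier coefficients. For $\lambda>0$, let $\theta(x,\lambda)=(2\pi)^{-N}\sum_{|m|^2<\lambda}e^{imx}$. For integers $k\ge0$, let $\theta_k(x)=\theta(x,k)\psi(x)$ and $\Theta_j=\theta_{j+1}-\theta_j$. Let $(\Theta_j)_n=(2\pi)^{-N}\int_{T^N}\Theta_j(x)e^{-inx}dx$; equivalently, $(\Theta_j)_n=(2\pi)^{-N}\sum_{m\in\mathbb{Z}^N,\,|n-m|^2=j}\psi_m$, which is $0$ if there is no such $m$. *)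

theory Defs
  imports "HOL-Analysis.Analysis"
begin

definition chi :: "real \<Rightarrow> real \<Rightarrow> real" where
  "chi b t = (if 0 \<le> t \<and> t \<le> b then 1 else 0)"

definition smooth_on_nonneg :: "(real \<Rightarrow> real) \<Rightarrow> bool" where
  "smooth_on_nonneg f \<longleftrightarrow> (\<exists>D. D 0 = f \<and>
     (\<forall>k x. 0 \<le> x \<longrightarrow> (D k has_real_derivative D (Suc k) x) (at x within {0..})))"

definition lattice :: "(real^'n) set" where
  "lattice = {m. \<forall>i. m $ i \<in> \<int>}"

text \<open>Fourier coefficient psi_m of psi(x) = phi2(|x|) = 1 - phi1(|x|) on T^N = (-pi,pi]^N.\<close>
definition psi_coeff :: "(real \<Rightarrow> real) \<Rightarrow> real^'n \<Rightarrow> complex" where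
  "psi_coeff phi1 m =
     (1 / (2 * pi) ^ CARD('n)) *
     integral (cbox (\<chi> i. - pi) (\<chi> i. pi))
       (\<lambda>x::real^'n. complex_of_real (1 - phi1 (norm x)) * exp (- \<i> * complex_of_real (m \<bullet> x)))"

definition Theta_coeff :: "(real \<Rightarrow> real) \<Rightarrow> nat \<Rightarrow> real^'n \<Rightarrow> complex" where
  "Theta_coeff phi1 j n =
     (1 / (2 * pi) ^ CARD('n)) *
     (\<Sum>m \<in> {m \<in> lattice. (norm (n - m))\<^sup>2 = real j}. psi_coeff phi1 m)"

end

(*
  For a lattice point m \<noteq> 0 the integral of e^{-imx} over the cube vanishes, so psi_m is,
  up to the factor -(2 pi)^{-N}, the Fourier transform of the compactly supported function
  phi1(|x|). If |m_i| is the largest coordinate of m, translating by h = pi / |m_i| along the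
  i-th axis multiplies this transform by -1, so the l-th forward difference with step h
  multiplies it by (-2)^l. As phi1 is constant near 0, phi1(|x|) is smooth and its l-th
  differences are O(h^l) uniformly; hence psi_m = O((1 + |m|_oo)^{-L}) for every L.

  The lattice points contributing to (Theta_j)_n with k \<le> sqrt j < k + 1 lie in the shell
  k \<le> |n - m| < k + 1, where 1 + ||n| - k| \<le> (sqrt N + 2)(1 + |m|_oo). Spending 2N powers of
  the decay on the summable weight prod_j (1 + |m_j|)^{-2} and l powers on this inequality
  bounds sum_j |(Theta_j)_n|, whose square dominates the sum of squares.
*)

theory Submission
  imports Defs "HOL-Computational_Algebra.Polynomial"
begin

section \<open>Forward differences\<close>

fun forward_diff :: "'a::plus \<Rightarrow> nat \<Rightarrow> ('a \<Rightarrow> 'b::minus) \<Rightarrow> 'a \<Rightarrow> 'b" where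
  "forward_diff h 0 f = f"
| "forward_diff h (Suc l) f = (\<lambda>x. forward_diff h l f (x + h) - forward_diff h l f x)"

lemma forward_diff_translate:
  fixes f :: "'a::ab_semigroup_add \<Rightarrow> 'b::minus"
  shows "forward_diff h l (\<lambda>u. f (u + t)) v = forward_diff h l f (v + t)"
  by (induction l arbitrary: v) (auto simp: add_ac)

lemma forward_diff_along_line:
  fixes q :: "'a::real_vector \<Rightarrow> 'b::minus"
  shows "forward_diff (h *\<^sub>R e) l q x = forward_diff h l (\<lambda>u. q (x + u *\<^sub>R e)) 0"
proof (induction l arbitrary: x)
  case 0
  then show ?case by simp
next
  case (Suc l)
  have "forward_diff h l (\<lambda>u. q (x + h *\<^sub>R e + u *\<^sub>R e)) 0
      = forward_diff h l (\<lambda>u. q (x + u *\<^sub>R e)) (0 + h)"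
    using forward_diff_translate[of h l "\<lambda>u. q (x + u *\<^sub>R e)" h 0] by (simp add: algebra_simps)
  then show ?case using Suc by simp
qed

lemma forward_diff_has_real_derivative:
  assumes "\<And>u. (f has_real_derivative f' u) (at u)"
  shows "(forward_diff h l f has_real_derivative forward_diff h l f' u) (at u)"
proof (induction l arbitrary: u)
  case 0
  then show ?case using assms by simp
next
  case (Suc l)
  have "((\<lambda>u. u + h) has_real_derivative 1) (at u)"
    by (auto intro!: derivative_eq_intros)
  from DERIV_chain2[OF Suc[of "u + h"] this]
  have "((\<lambda>u. forward_diff h l f (u + h)) has_real_derivative forward_diff h l f' (u + h)) (at u)"
    by simp
  then show ?case using DERIV_diff[OF _ Suc[of u]] by simp
qed

lemma abs_forward_diff_le:
  assumes "0 \<le> h"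
    and "\<And>k u. k < l \<Longrightarrow> (D k has_real_derivative D (Suc k) u) (at u)"
    and "\<And>u. \<bar>D l u\<bar> \<le> M"
  shows "\<bar>forward_diff h l (D 0) u\<bar> \<le> h ^ l * M"
  using assms(2,3)
proof (induction l arbitrary: D u)
  case 0
  then show ?case by simp
next
  case (Suc l)
  have IH: "\<bar>forward_diff h l (D 1) v\<bar> \<le> h ^ l * M" for v
    using Suc.IH[of "\<lambda>k. D (Suc k)" v] Suc.prems by auto
  have der: "(forward_diff h l (D 0) has_real_derivative forward_diff h l (D 1) v) (at v)" for v
    by (rule forward_diff_has_real_derivative) (use Suc.prems(1)[of 0] in auto)
  show ?case
  proof (cases "h = 0")
    case False
    with assms(1) have "u < u + h" by simp
    from MVT2[OF this, of "forward_diff h l (D 0)"] der obtain z where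
      "forward_diff h l (D 0) (u + h) - forward_diff h l (D 0) u = (u + h - u) * forward_diff h l (D 1) z"
      by blast
    then have "\<bar>forward_diff h (Suc l) (D 0) u\<bar> = h * \<bar>forward_diff h l (D 1) z\<bar>"
      using assms(1) by (simp add: abs_mult)
    also have "\<dots> \<le> h * (h ^ l * M)"
      using IH[of z] assms(1) by (intro mult_left_mono) auto
    finally show ?thesis by (simp add: algebra_simps)
  qed simp
qed

lemma continuous_on_forward_diff:
  fixes q :: "'a::real_normed_vector \<Rightarrow> 'b::real_normed_vector"
  assumes "continuous_on UNIV q"
  shows "continuous_on UNIV (forward_diff v l q)"
proof (induction l)
  case (Suc l)
  have "continuous_on UNIV (\<lambda>x. forward_diff v l q (x + v))"
    by (rule continuous_on_compose2[OF Suc.IH, of UNIV "\<lambda>x. x + v"]) (auto intro: continuous_intros)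
  then show ?case using Suc.IH by (auto intro!: continuous_intros)
qed (use assms in simp)

section \<open>Derivatives of compositions with polynomial inner derivatives\<close>

text \<open>Faa di Bruno's formula for \<open>D 0 \<circ> \<rho>\<close>, where \<open>D (Suc i)\<close> is the derivative of \<open>D i\<close>,
  in the special situation where \<open>\<rho>' = t(w)\<close> for an auxiliary function \<open>w\<close> with \<open>w' = r(w)\<close>:
  then the \<open>j\<close>-th derivative is \<open>\<Sum>i\<le>j. p\<^sub>j\<^sub>i(w) \<cdot> D i (\<rho>)\<close> with polynomials \<open>p\<^sub>j\<^sub>i\<close>.\<close>
fun chain_poly :: "real poly \<Rightarrow> real poly \<Rightarrow> nat \<Rightarrow> nat \<Rightarrow> real poly" where
  "chain_poly r t 0 i = (if i = 0 then 1 else 0)"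
| "chain_poly r t (Suc j) i =
     pderiv (chain_poly r t j i) * r + (case i of 0 \<Rightarrow> 0 | Suc i' \<Rightarrow> chain_poly r t j i' * t)"

definition chain_deriv ::
    "real poly \<Rightarrow> real poly \<Rightarrow> (nat \<Rightarrow> real \<Rightarrow> real) \<Rightarrow> (real \<Rightarrow> real) \<Rightarrow> (real \<Rightarrow> real) \<Rightarrow> nat \<Rightarrow> real \<Rightarrow> real"
  where "chain_deriv r t D w \<rho> j y = (\<Sum>i\<le>j. poly (chain_poly r t j i) (w y) * D i (\<rho> y))"

lemma chain_poly_eq_0: "j < i \<Longrightarrow> chain_poly r t j i = 0"
proof (induction j arbitrary: i)
  case (Suc j)
  then show ?case by (cases i) auto
qed simp

lemma chain_poly_0: "chain_poly r t j 0 = (if j = 0 then 1 else 0)"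
  by (induction j) auto

lemma chain_deriv_0 [simp]: "chain_deriv r t D w \<rho> 0 y = D 0 (\<rho> y)"
  by (simp add: chain_deriv_def)

lemma chain_deriv_has_real_derivative:
  assumes w: "(w has_real_derivative poly r (w x)) (at x)"
    and \<rho>: "(\<rho> has_real_derivative poly t (w x)) (at x)"
    and D: "\<And>i. (D i has_real_derivative D (Suc i) (\<rho> x)) (at (\<rho> x))"
  shows "(chain_deriv r t D w \<rho> j has_real_derivative chain_deriv r t D w \<rho> (Suc j) x) (at x)"
proof -
  let ?p = "chain_poly r t j"
  have summand: "((\<lambda>y. poly (?p i) (w y) * D i (\<rho> y)) has_real_derivative
      poly (pderiv (?p i)) (w x) * poly r (w x) * D i (\<rho> x)
      + poly (?p i) (w x) * (D (Suc i) (\<rho> x) * poly t (w x))) (at x)" for i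
    using DERIV_mult[OF DERIV_chain2[OF poly_DERIV[of "?p i"] w] DERIV_chain2[OF D \<rho>]]
    by (simp add: algebra_simps)
  have "chain_deriv r t D w \<rho> (Suc j) x
     = (\<Sum>i\<le>Suc j. poly (pderiv (?p i)) (w x) * poly r (w x) * D i (\<rho> x))
       + (\<Sum>i\<le>Suc j. poly (case i of 0 \<Rightarrow> 0 | Suc i' \<Rightarrow> ?p i' * t) (w x) * D i (\<rho> x))"
    by (simp add: chain_deriv_def sum.distrib algebra_simps)
  also have "(\<Sum>i\<le>Suc j. poly (pderiv (?p i)) (w x) * poly r (w x) * D i (\<rho> x))
      = (\<Sum>i\<le>j. poly (pderiv (?p i)) (w x) * poly r (w x) * D i (\<rho> x))"
    by (simp add: chain_poly_eq_0)
  also have "(\<Sum>i\<le>Suc j. poly (case i of 0 \<Rightarrow> 0 | Suc i' \<Rightarrow> ?p i' * t) (w x) * D i (\<rho> x))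
      = (\<Sum>i\<le>j. poly (?p i) (w x) * (D (Suc i) (\<rho> x) * poly t (w x)))"
    by (subst sum.atMost_Suc_shift) (simp add: algebra_simps)
  finally show ?thesis
    unfolding chain_deriv_def[abs_def] using DERIV_sum[OF summand, where S="{..j}"] by (simp add: sum.distrib)
qed

section \<open>Fourier integrals of functions supported in a cube\<close>

abbreviation cube :: "real \<Rightarrow> (real^'n) set" where
  "cube K \<equiv> cbox (\<chi> j. - K) (\<chi> j. K)"

lemma mem_cube_iff: "x \<in> cube K \<longleftrightarrow> (\<forall>j. \<bar>x $ j\<bar> \<le> K)"
  unfolding mem_box_cart vec_lambda_beta abs_le_iff by (meson minus_le_iff)

definition supported_in_cube :: "real \<Rightarrow> (real^'n \<Rightarrow> 'b::zero) \<Rightarrow> bool" where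
  "supported_in_cube K q \<longleftrightarrow> (\<forall>x. x \<notin> cube K \<longrightarrow> q x = 0)"

lemma supported_in_cube_mono: "supported_in_cube K q \<Longrightarrow> K \<le> K' \<Longrightarrow> supported_in_cube K' q"
  unfolding supported_in_cube_def mem_cube_iff by (meson order_trans)

lemma supported_in_cube_translate:
  fixes q :: "real^'n \<Rightarrow> 'b::zero"
  assumes "supported_in_cube K q"
  shows "supported_in_cube (K + infnorm v) (\<lambda>x. q (x + v))"
  unfolding supported_in_cube_def
proof (intro allI impI)
  fix x :: "real^'n"
  assume "x \<notin> cube (K + infnorm v)"
  then obtain j where "K + infnorm v < \<bar>x $ j\<bar>"
    unfolding mem_cube_iff by (auto simp: not_le)
  moreover have "\<bar>v $ j\<bar> \<le> infnorm v" by (rule component_le_infnorm_cart)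
  ultimately have "K < \<bar>(x + v) $ j\<bar>" by simp
  then show "q (x + v) = 0"
    using assms unfolding supported_in_cube_def mem_cube_iff by (metis not_le vector_add_component)
qed

lemma supported_in_cube_forward_diff:
  fixes q :: "real^'n \<Rightarrow> 'b::ab_group_add"
  assumes "supported_in_cube K q"
  shows "supported_in_cube (K + real l * infnorm v) (forward_diff v l q)"
proof (induction l)
  case (Suc l)
  have "supported_in_cube (K + real l * infnorm v + infnorm v) (\<lambda>x. forward_diff v l q (x + v))"
    by (rule supported_in_cube_translate[OF Suc])
  then have "supported_in_cube (K + real (Suc l) * infnorm v) (\<lambda>x. forward_diff v l q (x + v))"
    by (simp add: algebra_simps)
  moreover have "supported_in_cube (K + real (Suc l) * infnorm v) (forward_diff v l q)"
    by (rule supported_in_cube_mono[OF Suc]) (use infnorm_pos_le[of v] in \<open>simp add: algebra_simps\<close>)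
  ultimately show ?case by (simp add: supported_in_cube_def)
qed (use assms in simp)

lemma integral_cbox_split_axis:
  fixes f :: "real^'n \<Rightarrow> 'b::banach"
  assumes "f integrable_on cbox a b" "a $ i \<le> c" "c \<le> b $ i"
  shows "integral (cbox a b) f
       = integral (cbox a (b + (c - b $ i) *\<^sub>R axis i 1)) f
       + integral (cbox (a + (c - a $ i) *\<^sub>R axis i 1) b) f"
proof -
  have "cbox a b \<inter> {x. x \<bullet> axis i 1 \<le> c} = cbox a (b + (c - b $ i) *\<^sub>R axis i 1)"
    using interval_split_cart(1)[where a=a and b=b and k=i and c=c] assms(3)
    by (simp add: inner_axis interval_cbox_cart) (auto simp: vec_eq_iff axis_def intro!: arg_cong[where f="cbox a"])
  moreover have "cbox a b \<inter> {x. c \<le> x \<bullet> axis i 1} = cbox (a + (c - a $ i) *\<^sub>R axis i 1) b"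
    using interval_split_cart(2)[where a=a and b=b and k=i and c=c] assms(2)
    by (simp add: inner_axis interval_cbox_cart)
      (auto simp: vec_eq_iff axis_def intro!: arg_cong[where f="\<lambda>a. cbox a b"])
  ultimately show ?thesis
    using integral_split[OF assms(1), where k="axis i 1" and c=c] by (simp add: Basis_vec_def axis_eq_axis)
qed

lemma integral_cube_translate_periodic:
  fixes f :: "real^'n \<Rightarrow> 'b::banach"
  assumes cont: "continuous_on UNIV f"
    and periodic: "\<And>x. f (x + (2 * pi) *\<^sub>R axis i 1) = f x"
    and s: "0 \<le> s" "s \<le> 2 * pi"
  shows "integral (cube pi) (\<lambda>x. f (x + s *\<^sub>R axis i 1)) = integral (cube pi) f"
proof -
  define lo hi e where "lo = (\<chi> j. - pi :: real^'n)" and "hi = (\<chi> j. pi :: real^'n)"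
    and "e = axis i (1::real)"
  have int: "f integrable_on cbox u v" for u v
    using cont by (intro integrable_continuous) (auto intro: continuous_on_subset)
  have "integral (cbox lo hi) (\<lambda>x. f (x + s *\<^sub>R e)) = integral (cbox (lo + s *\<^sub>R e) (hi + s *\<^sub>R e)) f"
    using integral_shift_cbox[of "lo + s *\<^sub>R e" "s *\<^sub>R e" "hi + s *\<^sub>R e" f] by simp
  also have "\<dots> = integral (cbox (lo + s *\<^sub>R e) hi) f
                 + integral (cbox (lo + (2 * pi) *\<^sub>R e) (hi + s *\<^sub>R e)) f"
    using integral_cbox_split_axis[OF int, of "lo + s *\<^sub>R e" i pi "hi + s *\<^sub>R e"] s
    by (simp add: lo_def hi_def e_def algebra_simps)
  also have "integral (cbox (lo + (2 * pi) *\<^sub>R e) (hi + s *\<^sub>R e)) f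
           = integral (cbox lo (hi + (s - 2 * pi) *\<^sub>R e)) f"
  proof -
    have "(\<lambda>x. f (x + (2 * pi) *\<^sub>R e)) = f" by (simp add: periodic e_def)
    then have "integral (cbox (lo + (2 * pi) *\<^sub>R e - (2 * pi) *\<^sub>R e) (hi + s *\<^sub>R e - (2 * pi) *\<^sub>R e)) f
             = integral (cbox (lo + (2 * pi) *\<^sub>R e) (hi + s *\<^sub>R e)) f"
      using integral_shift_cbox[of "lo + (2 * pi) *\<^sub>R e" "(2 * pi) *\<^sub>R e" "hi + s *\<^sub>R e" f]
      by simp
    then show ?thesis by (simp add: algebra_simps)
  qed
  also have "integral (cbox (lo + s *\<^sub>R e) hi) f + integral (cbox lo (hi + (s - 2 * pi) *\<^sub>R e)) f
           = integral (cbox lo hi) f"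
    using integral_cbox_split_axis[OF int, of lo i "s - pi" hi] s
    by (simp add: lo_def hi_def e_def algebra_simps)
  finally show ?thesis by (simp add: lo_def hi_def e_def)
qed

definition plane_wave :: "'a::real_inner \<Rightarrow> 'a \<Rightarrow> complex" where
  "plane_wave m x = exp (- \<i> * complex_of_real (m \<bullet> x))"

lemma continuous_on_plane_wave [continuous_intros]: "continuous_on S (plane_wave m)"
  unfolding plane_wave_def by (intro continuous_intros)

lemma plane_wave_add: "plane_wave m (x + v) = plane_wave m x * plane_wave m v"
  unfolding plane_wave_def by (simp add: inner_add_right distrib_left mult_exp_exp)

lemma plane_wave_eq_cis: "plane_wave m x = cis (- (m \<bullet> x))"
  by (simp add: plane_wave_def cis_conv_exp)

lemma norm_plane_wave [simp]: "norm (plane_wave m x) = 1"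
  by (simp add: plane_wave_eq_cis)

lemma plane_wave_axis: "plane_wave m (h *\<^sub>R axis i 1) = cis (- (h * m $ i))"
  by (simp add: plane_wave_eq_cis inner_axis)

lemma integral_cube_plane_wave_eq_0:
  fixes m :: "real^'n"
  assumes "m $ i \<in> \<int>" "m $ i \<noteq> 0"
  shows "integral (cube pi) (plane_wave m) = 0"
proof -
  define s where "s = pi / \<bar>m $ i\<bar>"
  have "1 \<le> \<bar>m $ i\<bar>" using Ints_nonzero_abs_ge1 assms by blast
  then have s: "0 \<le> s" "s \<le> 2 * pi" unfolding s_def by (auto simp: field_simps)
  have "plane_wave m ((2 * pi) *\<^sub>R axis i 1) = 1"
    unfolding plane_wave_axis using cis_multiple_2pi[of "- m $ i"] assms(1) by simp
  then have periodic: "plane_wave m (x + (2 * pi) *\<^sub>R axis i 1) = plane_wave m x" for x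
    by (simp add: plane_wave_add)
  have "s * m $ i = pi \<or> s * m $ i = - pi"
    unfolding s_def using assms(2) by (cases "m $ i > 0") auto
  then have "plane_wave m (s *\<^sub>R axis i 1) = -1"
    by (auto simp: plane_wave_axis complex_eq_iff)
  then have "(\<lambda>x. plane_wave m (x + s *\<^sub>R axis i 1)) = (\<lambda>x. - plane_wave m x)"
    by (simp add: plane_wave_add)
  with integral_cube_translate_periodic[OF continuous_on_plane_wave periodic s]
  show ?thesis by (simp add: integral_neg)
qed

definition fourier_integral :: "(real^'n \<Rightarrow> real) \<Rightarrow> real^'n \<Rightarrow> complex" where
  "fourier_integral q m = integral UNIV (\<lambda>x. of_real (q x) * plane_wave m x)"

lemma has_integral_fourier_integral:
  assumes "continuous_on UNIV q" "supported_in_cube K q"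
  shows "((\<lambda>x. of_real (q x) * plane_wave m x) has_integral fourier_integral q m) (cube K)"
    and "((\<lambda>x. of_real (q x) * plane_wave m x) has_integral fourier_integral q m) UNIV"
proof -
  let ?F = "\<lambda>x. of_real (q x) * plane_wave m x"
  have cube: "(?F has_integral integral (cube K) ?F) (cube K)"
    using assms(1) by (intro integrable_integral integrable_continuous)
      (auto intro!: continuous_intros intro: continuous_on_subset)
  then have univ: "(?F has_integral integral (cube K) ?F) UNIV"
    by (rule has_integral_on_superset) (use assms(2) in \<open>auto simp: supported_in_cube_def\<close>)
  then have "fourier_integral q m = integral (cube K) ?F"
    unfolding fourier_integral_def by (rule integral_unique)
  with cube univ show "(?F has_integral fourier_integral q m) (cube K)" "(?F has_integral fourier_integral q m) UNIV"
    by simp_all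
qed

lemma fourier_integral_translate:
  fixes q :: "real^'n \<Rightarrow> real" and v :: "real^'n"
  assumes cont: "continuous_on UNIV q" and supp: "supported_in_cube K q"
  shows "fourier_integral (\<lambda>x. q (x + v)) m = cis (m \<bullet> v) * fourier_integral q m"
proof -
  let ?F = "\<lambda>x. of_real (q x) * plane_wave m x"
  have "((\<lambda>x. ?F (x + v)) has_integral fourier_integral q m) (cbox ((\<chi> j. - K) - v) ((\<chi> j. K) - v))"
    by (rule has_integral_shift_cbox[OF has_integral_fourier_integral(1)[OF cont supp]])
  then have "((\<lambda>x. ?F (x + v)) has_integral fourier_integral q m) UNIV"
  proof (rule has_integral_on_superset)
    fix x :: "real^'n"
    assume "x \<notin> cbox ((\<chi> j. - K) - v) ((\<chi> j. K) - v)"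
    then have "x + v \<notin> cube K" by (auto simp: mem_box_cart algebra_simps)
    then show "?F (x + v) = 0" using supp by (simp add: supported_in_cube_def)
  qed simp
  then have "((\<lambda>x. cis (m \<bullet> v) * ?F (x + v)) has_integral cis (m \<bullet> v) * fourier_integral q m) UNIV"
    by (rule has_integral_mult_right)
  moreover have "cis (m \<bullet> v) * plane_wave m v = 1"
    unfolding plane_wave_def cis_conv_exp by (simp flip: exp_add)
  then have "cis (m \<bullet> v) * ?F (x + v) = of_real (q (x + v)) * plane_wave m x" for x
    by (simp add: plane_wave_add mult_ac)
  ultimately show ?thesis
    unfolding fourier_integral_def[of "\<lambda>x. q (x + v)"] by (simp add: integral_unique)
qed

lemma fourier_integral_forward_diff:
  fixes q :: "real^'n \<Rightarrow> real" and v :: "real^'n"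
  assumes cont: "continuous_on UNIV q" and supp: "supported_in_cube K q"
  shows "fourier_integral (forward_diff v l q) m = (cis (m \<bullet> v) - 1) ^ l * fourier_integral q m"
proof (induction l)
  case (Suc l)
  let ?g = "forward_diff v l q"
  have cont_g: "continuous_on UNIV ?g" and supp_g: "supported_in_cube (K + real l * infnorm v) ?g"
    using continuous_on_forward_diff[OF cont] supported_in_cube_forward_diff[OF supp] .
  have cont_g': "continuous_on UNIV (\<lambda>x. ?g (x + v))"
    by (rule continuous_on_compose2[OF cont_g]) (auto intro: continuous_intros)
  have supp_g': "supported_in_cube (K + real l * infnorm v + infnorm v) (\<lambda>x. ?g (x + v))"
    by (rule supported_in_cube_translate[OF supp_g])
  have "((\<lambda>x. of_real (forward_diff v (Suc l) q x) * plane_wave m x) has_integral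
          fourier_integral (\<lambda>x. ?g (x + v)) m - fourier_integral ?g m) UNIV"
    using has_integral_diff[OF has_integral_fourier_integral(2)[OF cont_g' supp_g']
        has_integral_fourier_integral(2)[OF cont_g supp_g]]
    by (simp add: algebra_simps)
  then have "fourier_integral (forward_diff v (Suc l) q) m
           = fourier_integral (\<lambda>x. ?g (x + v)) m - fourier_integral ?g m"
    unfolding fourier_integral_def[of "forward_diff v (Suc l) q"] by (rule integral_unique)
  also have "\<dots> = (cis (m \<bullet> v) - 1) * fourier_integral ?g m"
    using fourier_integral_translate[OF cont_g supp_g, where v=v and m=m] by (simp add: algebra_simps)
  finally show ?case using Suc.IH by simp
qed simp

lemma norm_fourier_integral_le:
  fixes q :: "real^'n \<Rightarrow> real"
  assumes "continuous_on UNIV q" "supported_in_cube K q" "\<And>x. \<bar>q x\<bar> \<le> B"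
  shows "norm (fourier_integral q m) \<le> B * Henstock_Kurzweil_Integration.content (cube K :: (real^'n) set)"
proof -
  have "0 \<le> B" using assms(3) by (meson abs_ge_zero order_trans)
  then show ?thesis
    using has_integral_bound[OF _ has_integral_fourier_integral(1)[OF assms(1,2)]] assms(3)
    by (simp add: norm_mult)
qed

section \<open>Weighted sums over lattice points\<close>

lemma infnorm_attained_cart: "\<exists>i. infnorm (x::real^'n) = \<bar>x $ i\<bar>"
proof -
  have "infnorm x \<in> (\<lambda>i. \<bar>x \<bullet> i\<bar>) ` Basis"
    unfolding infnorm_Max by (rule Max_in) auto
  then obtain b :: "real^'n" where "b \<in> Basis" "infnorm x = \<bar>x \<bullet> b\<bar>" by auto
  then show ?thesis by (auto simp: Basis_vec_def inner_axis)
qed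

lemma sum_inverse_square_le: "(\<Sum>z\<in>{- int Q..int Q}. 1 / (1 + \<bar>real_of_int z\<bar>)\<^sup>2) \<le> 3"
proof -
  have "(\<Sum>z\<in>{- int Q..int Q}. 1 / (1 + \<bar>real_of_int z\<bar>)\<^sup>2) \<le> 3 - 2 / (real Q + 1)"
  proof (induction Q)
    case (Suc Q)
    have "{- int (Suc Q)..int (Suc Q)} = insert (- int (Suc Q)) (insert (int (Suc Q)) {- int Q..int Q})"
      by auto
    then have "(\<Sum>z\<in>{- int (Suc Q)..int (Suc Q)}. 1 / (1 + \<bar>real_of_int z\<bar>)\<^sup>2)
        = 2 / (real Q + 2)\<^sup>2 + (\<Sum>z\<in>{- int Q..int Q}. 1 / (1 + \<bar>real_of_int z\<bar>)\<^sup>2)"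
      by (simp add: add_ac)
    also have "\<dots> \<le> 2 / ((real Q + 1) * (real Q + 2)) + (3 - 2 / (real Q + 1))"
      using Suc.IH by (intro add_mono divide_left_mono) (auto simp: power2_eq_square)
    also have "\<dots> = 3 - 2 / (real (Suc Q) + 1)"
    proof -
      have "2 / ((real Q + 1) * (real Q + 2)) = 2 / (real Q + 1) - 2 / (real Q + 2)"
        by (simp add: field_simps)
      then show ?thesis by (simp add: add.commute)
    qed
    finally show ?case .
  qed simp
  moreover have "0 \<le> 2 / (real Q + 1)" by simp
  ultimately show ?thesis by linarith
qed

definition lattice_weight :: "real^'n \<Rightarrow> real" where
  "lattice_weight m = (\<Prod>j\<in>UNIV. 1 / (1 + \<bar>m $ j\<bar>)\<^sup>2)"

lemma inverse_power_infnorm_le_lattice_weight: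
  "1 / (1 + infnorm m) ^ (2 * CARD('n)) \<le> lattice_weight (m::real^'n)"
proof -
  have "1 / (1 + infnorm m) ^ (2 * CARD('n)) = (\<Prod>j\<in>(UNIV::'n set). 1 / (1 + infnorm m)\<^sup>2)"
    by (simp add: power_mult power_one_over)
  also have "\<dots> \<le> lattice_weight m"
    unfolding lattice_weight_def
    by (intro prod_mono conjI divide_left_mono power_mono)
      (use infnorm_pos_le[of m] in \<open>auto simp: component_le_infnorm_cart add_pos_nonneg intro!: mult_pos_pos\<close>)
  finally show ?thesis .
qed

lemma lattice_weight_sum_le:
  fixes A :: "(real^'n) set"
  assumes A: "A \<subseteq> lattice" and bounded: "\<And>m. m \<in> A \<Longrightarrow> infnorm m \<le> real Q"
  shows "finite A" and "(\<Sum>m\<in>A. lattice_weight m) \<le> 3 ^ CARD('n)"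
proof -
  define Z where "Z = real_of_int ` {- int Q..int Q}"
  define w where "w t = 1 / (1 + \<bar>t\<bar>)\<^sup>2" for t :: real
  have "vec_nth m \<in> PiE UNIV (\<lambda>_. Z)" if "m \<in> A" for m
  proof -
    have "m $ j \<in> Z" for j
    proof -
      have "m $ j \<in> \<int>" using A \<open>m \<in> A\<close> by (auto simp: lattice_def)
      then obtain z where z: "m $ j = real_of_int z" by (rule Ints_cases)
      have "\<bar>m $ j\<bar> \<le> real Q" using bounded[OF \<open>m \<in> A\<close>] component_le_infnorm_cart[of m j] by linarith
      then show ?thesis unfolding Z_def z by (auto simp: abs_le_iff)
    qed
    then show ?thesis by (auto simp: PiE_UNIV_domain)
  qed
  then have sub: "vec_nth ` A \<subseteq> PiE UNIV (\<lambda>_. Z)" by blast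
  have fin: "finite (PiE (UNIV :: 'n set) (\<lambda>_. Z))" unfolding Z_def by (intro finite_PiE) auto
  have inj: "inj_on vec_nth A" by (simp add: inj_on_def vec_nth_inject)
  show "finite A" using finite_subset[OF sub fin] inj by (simp add: finite_image_iff)
  have "(\<Sum>m\<in>A. lattice_weight m) = (\<Sum>f\<in>vec_nth ` A. \<Prod>j\<in>UNIV. w (f j))"
    by (simp add: sum.reindex[OF inj] lattice_weight_def w_def)
  also have "\<dots> \<le> (\<Sum>f\<in>PiE (UNIV :: 'n set) (\<lambda>_. Z). \<Prod>j\<in>UNIV. w (f j))"
    by (rule sum_mono2[OF fin sub]) (simp add: w_def prod_nonneg)
  also have "\<dots> = (\<Prod>j\<in>(UNIV::'n set). \<Sum>t\<in>Z. w t)"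
    by (rule prod_sum_PiE[symmetric]) (auto simp: Z_def)
  also have "\<dots> \<le> (\<Prod>j\<in>(UNIV::'n set). 3)"
  proof (intro prod_mono conjI)
    have "(\<Sum>t\<in>Z. w t) = (\<Sum>z\<in>{- int Q..int Q}. 1 / (1 + \<bar>real_of_int z\<bar>)\<^sup>2)"
      unfolding Z_def w_def by (subst sum.reindex) (auto simp: inj_on_def)
    then show "(\<Sum>t\<in>Z. w t) \<le> 3" using sum_inverse_square_le[of Q] by simp
    show "0 \<le> (\<Sum>t\<in>Z. w t)" by (simp add: w_def sum_nonneg)
  qed
  finally show "(\<Sum>m\<in>A. lattice_weight m) \<le> 3 ^ CARD('n)" by simp
qed

lemma shell_infnorm_bounds:
  fixes n m :: "real^'n"
  assumes "k \<le> norm (n - m)" "norm (n - m) < k + 1"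
  shows "1 + \<bar>norm n - k\<bar> \<le> (sqrt CARD('n) + 2) * (1 + infnorm m)"
    and "infnorm m \<le> norm n + k + 1"
proof -
  have "norm n \<le> norm m + norm (n - m)" using norm_triangle_sub[of n m] by (simp add: add_ac)
  moreover have "norm (n - m) \<le> norm n + norm m" by (rule norm_triangle_ineq4)
  ultimately have "\<bar>norm n - k\<bar> \<le> norm m + 1" using assms by linarith
  moreover have "norm m \<le> sqrt CARD('n) * infnorm m" using norm_le_infnorm[of m] by simp
  moreover have "(sqrt CARD('n) + 2) * (1 + infnorm m) = sqrt CARD('n) + 2 + sqrt CARD('n) * infnorm m + 2 * infnorm m"
    by (simp add: algebra_simps)
  ultimately show "1 + \<bar>norm n - k\<bar> \<le> (sqrt CARD('n) + 2) * (1 + infnorm m)"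
    using infnorm_pos_le[of m] real_sqrt_ge_zero[of "CARD('n)"] by linarith
  have "norm m \<le> norm n + norm (n - m)" using norm_triangle_sub[of m n] by (simp add: norm_minus_commute)
  then show "infnorm m \<le> norm n + k + 1" using infnorm_le_norm[of m] assms(2) by linarith
qed

lemma finite_sqrt_shell: "finite {j::nat. real k \<le> sqrt (real j) \<and> sqrt (real j) < real k + 1}"
proof (rule finite_subset)
  show "{j::nat. real k \<le> sqrt (real j) \<and> sqrt (real j) < real k + 1} \<subseteq> {..<(k + 1)\<^sup>2}"
  proof
    fix j
    assume "j \<in> {j. real k \<le> sqrt (real j) \<and> sqrt (real j) < real k + 1}"
    then have "(sqrt (real j))\<^sup>2 < (real k + 1)\<^sup>2" by (intro power_strict_mono) auto
    then have "real j < real ((k + 1)\<^sup>2)" by (simp add: add.commute)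
    then show "j \<in> {..<(k + 1)\<^sup>2}" by (simp only: of_nat_less_iff lessThan_iff)
  qed
qed simp

lemma power_decay_le_lattice_weight:
  fixes m :: "real^'n"
  assumes "0 \<le> A" "0 \<le> d" "1 + d \<le> \<gamma> * (1 + infnorm m)"
  shows "A / (1 + infnorm m) ^ (l + 2 * CARD('n)) \<le> A * \<gamma> ^ l / (1 + d) ^ l * lattice_weight m"
proof -
  have "0 < \<gamma> * (1 + infnorm m)" using assms(2,3) by linarith
  then have "0 < \<gamma>" using infnorm_pos_le[of m] by (simp add: zero_less_mult_iff)
  have "(1 + d) ^ l \<le> (\<gamma> * (1 + infnorm m)) ^ l"
    using assms(2,3) by (intro power_mono) auto
  then have "(1 + d) ^ l \<le> \<gamma> ^ l * (1 + infnorm m) ^ l" by (simp only: power_mult_distrib)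
  moreover have "0 < (1 + infnorm m) ^ l" "0 < (1 + d) ^ l"
    using assms(2) by (simp_all add: add_pos_nonneg infnorm_pos_le)
  ultimately have "1 / (1 + infnorm m) ^ l \<le> \<gamma> ^ l / (1 + d) ^ l"
    by (simp add: le_divide_eq pos_divide_le_eq)
  have "A / (1 + infnorm m) ^ (l + 2 * CARD('n))
      = A * (1 / (1 + infnorm m) ^ l) * (1 / (1 + infnorm m) ^ (2 * CARD('n)))"
    by (simp add: power_add)
  also have "\<dots> \<le> A * (\<gamma> ^ l / (1 + d) ^ l) * lattice_weight m"
    using \<open>1 / (1 + infnorm m) ^ l \<le> _\<close> inverse_power_infnorm_le_lattice_weight[of m] assms \<open>0 < \<gamma>\<close>
    by (intro mult_mono mult_left_mono) (auto simp: infnorm_pos_le)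
  finally show ?thesis by simp
qed

lemma sum_power2_le_power2_sum:
  fixes f :: "'a \<Rightarrow> real"
  assumes "\<And>j. j \<in> J \<Longrightarrow> 0 \<le> f j"
  shows "(\<Sum>j\<in>J. (f j)\<^sup>2) \<le> (\<Sum>j\<in>J. f j)\<^sup>2"
proof (cases "finite J")
  case True
  have "(\<Sum>j\<in>J. (f j)\<^sup>2) \<le> (\<Sum>j\<in>J. f j * (\<Sum>i\<in>J. f i))"
  proof (intro sum_mono)
    fix j
    assume "j \<in> J"
    then have "f j \<le> (\<Sum>i\<in>J. f i)" using assms True by (intro member_le_sum) auto
    then show "(f j)\<^sup>2 \<le> f j * (\<Sum>i\<in>J. f i)"
      using assms \<open>j \<in> J\<close> by (simp add: power2_eq_square mult_left_mono)
  qed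
  also have "\<dots> = (\<Sum>j\<in>J. f j)\<^sup>2" by (simp add: sum_distrib_right power2_eq_square)
  finally show ?thesis .
qed simp

section \<open>Decay of the Fourier coefficients of a smooth radial cutoff\<close>

lemma norm_add_axis_power2:
  fixes x :: "real^'n"
  shows "(norm (x + u *\<^sub>R axis i 1))\<^sup>2 = (u + x $ i)\<^sup>2 + ((norm x)\<^sup>2 - (x $ i)\<^sup>2)"
proof -
  have "axis i (1::real) \<bullet> axis i 1 = 1" by (simp only: inner_axis_axis) simp
  then show ?thesis
    unfolding power2_norm_eq_inner
    by (simp add: inner_add_left inner_add_right inner_axis inner_axis' algebra_simps power2_eq_square)
qed

locale radial_cutoff =
  fixes phi :: "real \<Rightarrow> real" and a b :: real and D :: "nat \<Rightarrow> real \<Rightarrow> real"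
  assumes b_pos: "0 < b" and a_le_pi: "a \<le> pi"
    and D_0: "D 0 = phi"
    and D_deriv: "\<And>k x. 0 \<le> x \<Longrightarrow> (D k has_real_derivative D (Suc k) x) (at x within {0..})"
    and phi_eq_1: "\<And>t. 0 \<le> t \<Longrightarrow> t \<le> b \<Longrightarrow> phi t = 1"
    and phi_eq_0: "\<And>t. a < t \<Longrightarrow> phi t = 0"
begin

lemma b_le_a: "b \<le> a"
  using phi_eq_1[of b] phi_eq_0[of b] b_pos by force

lemma D_has_real_derivative:
  assumes "0 < x"
  shows "(D k has_real_derivative D (Suc k) x) (at x)"
proof -
  have "(D k has_real_derivative D (Suc k) x) (at x within {0<..})"
    by (rule has_field_derivative_subset[OF D_deriv]) (use assms in auto)
  then show ?thesis using at_within_open[of x "{0<..}"] assms by simp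
qed

lemma D_eq_near_0: "0 < t \<Longrightarrow> t < b \<Longrightarrow> D k t = (if k = 0 then 1 else 0)"
proof (induction k arbitrary: t)
  case 0
  then show ?case using phi_eq_1 D_0 by simp
next
  case (Suc k)
  have "(D k has_real_derivative 0) (at t)"
    by (rule has_field_derivative_transform_within_open[where f="\<lambda>_. if k = 0 then 1 else 0" and S="{0<..<b}"])
      (use Suc in auto)
  with D_has_real_derivative[of t k] Suc.prems show ?case using DERIV_unique by auto
qed

lemma D_eq_0: "a < t \<Longrightarrow> D k t = 0"
proof (induction k arbitrary: t)
  case 0
  then show ?case using phi_eq_0 D_0 by simp
next
  case (Suc k)
  have "(D k has_real_derivative 0) (at t)"
    by (rule has_field_derivative_transform_within_open[where f="\<lambda>_. 0" and S="{a<..}"]) (use Suc in auto)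
  moreover have "0 < t" using Suc.prems b_pos b_le_a by linarith
  ultimately show ?case using D_has_real_derivative[of t k] DERIV_unique by blast
qed

text \<open>The derivatives of \<open>s \<mapsto> phi (sqrt s)\<close> for \<open>s > 0\<close>, via \<open>w = 1 / sqrt s\<close>, for which
  \<open>w' = - w\<^sup>3 / 2\<close> and \<open>sqrt' = w / 2\<close>.\<close>
abbreviation sqrt_chain :: "nat \<Rightarrow> real \<Rightarrow> real" where
  "sqrt_chain \<equiv> chain_deriv [:0, 0, 0, -1/2:] [:0, 1/2:] D (\<lambda>s. inverse (sqrt s)) sqrt"

text \<open>Since \<open>phi\<close> is constant near \<open>0\<close>, the function \<open>s \<mapsto> phi (sqrt s)\<close> extends smoothly to
  all of \<open>\<real>\<close>; these are the derivatives of that extension.\<close>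
definition phi_sqrt_deriv :: "nat \<Rightarrow> real \<Rightarrow> real" where
  "phi_sqrt_deriv j s = (if s < b\<^sup>2 then (if j = 0 then 1 else 0) else sqrt_chain j s)"

lemma sqrt_chain_has_real_derivative:
  assumes "0 < s"
  shows "(sqrt_chain j has_real_derivative sqrt_chain (Suc j) s) (at s)"
proof (rule chain_deriv_has_real_derivative)
  have "((\<lambda>s. inverse (sqrt s)) has_real_derivative - (inverse (sqrt s) ^ 2 * inverse (2 * sqrt s))) (at s)"
    using assms by (auto intro!: derivative_eq_intros simp: power2_eq_square)
  then show "((\<lambda>s. inverse (sqrt s)) has_real_derivative poly [:0, 0, 0, -1/2:] (inverse (sqrt s))) (at s)"
    by (rule DERIV_cong) (use assms in \<open>simp add: field_simps power_inverse\<close>)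
  show "(sqrt has_real_derivative poly [:0, 1/2:] (inverse (sqrt s))) (at s)"
    using assms DERIV_real_sqrt[of s] by (simp add: field_simps)
  show "(D i has_real_derivative D (Suc i) (sqrt s)) (at (sqrt s))" for i
    using D_has_real_derivative assms by simp
qed

lemma sqrt_chain_near_0:
  assumes "0 < s" "s < b\<^sup>2"
  shows "sqrt_chain j s = (if j = 0 then 1 else 0)"
proof -
  have "sqrt s < b" using assms b_pos real_sqrt_less_iff[of s "b\<^sup>2"] by simp
  then have "D i (sqrt s) = (if i = 0 then 1 else 0)" for i using D_eq_near_0 assms by simp
  then have "sqrt_chain j s
      = (\<Sum>i\<le>j. if i = 0 then poly (chain_poly [:0, 0, 0, -1/2:] [:0, 1/2:] j i) (inverse (sqrt s)) else 0)"
    unfolding chain_deriv_def by (intro sum.cong) auto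
  then show ?thesis by (simp add: chain_poly_0)
qed

lemma phi_sqrt_deriv_has_real_derivative:
  "(phi_sqrt_deriv j has_real_derivative phi_sqrt_deriv (Suc j) s) (at s)"
proof (cases "s < b\<^sup>2")
  case True
  have "(phi_sqrt_deriv j has_real_derivative 0) (at s)"
    by (rule has_field_derivative_transform_within_open[where f="\<lambda>_. if j = 0 then 1 else 0" and S="{..<b\<^sup>2}"])
      (use True in \<open>auto simp: phi_sqrt_deriv_def\<close>)
  then show ?thesis using True by (simp add: phi_sqrt_deriv_def)
next
  case False
  moreover have "0 < b\<^sup>2" using b_pos by simp
  ultimately have "0 < s" by linarith
  have "(phi_sqrt_deriv j has_real_derivative sqrt_chain (Suc j) s) (at s)"
  proof (rule has_field_derivative_transform_within_open[OF sqrt_chain_has_real_derivative[OF \<open>0 < s\<close>]])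
    show "x \<in> {0<..} \<Longrightarrow> sqrt_chain j x = phi_sqrt_deriv j x" for x
      using sqrt_chain_near_0[of x j] by (auto simp: phi_sqrt_deriv_def)
  qed (use \<open>0 < s\<close> in auto)
  then show ?thesis using False by (simp add: phi_sqrt_deriv_def)
qed

lemma phi_sqrt_deriv_eq_0: "a\<^sup>2 < s \<Longrightarrow> phi_sqrt_deriv j s = 0"
proof -
  assume s: "a\<^sup>2 < s"
  then have "a < sqrt s" using b_pos b_le_a real_less_rsqrt by auto
  moreover have "b\<^sup>2 \<le> a\<^sup>2" using b_pos b_le_a by (simp add: power_mono)
  ultimately show ?thesis using s by (simp add: phi_sqrt_deriv_def chain_deriv_def D_eq_0)
qed

lemma phi_sqrt_deriv_0: "0 \<le> s \<Longrightarrow> phi_sqrt_deriv 0 s = phi (sqrt s)"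
  using phi_eq_1[of "sqrt s"] b_pos real_sqrt_less_iff[of s "b\<^sup>2"]
  by (auto simp: phi_sqrt_deriv_def D_0)

lemma phi_sqrt_deriv_bounded: "\<exists>M. \<forall>s. \<bar>phi_sqrt_deriv j s\<bar> \<le> M"
proof -
  have "continuous_on {0..a\<^sup>2} (phi_sqrt_deriv j)"
    using phi_sqrt_deriv_has_real_derivative DERIV_isCont continuous_at_imp_continuous_on by blast
  then obtain B where B: "\<And>s. s \<in> {0..a\<^sup>2} \<Longrightarrow> \<bar>phi_sqrt_deriv j s\<bar> \<le> B"
    using continuous_on_compact_bound[of "{0..a\<^sup>2}" "phi_sqrt_deriv j"] by auto
  have "\<bar>phi_sqrt_deriv j s\<bar> \<le> max 1 B" for s
  proof (cases "s < 0")
    case True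
    then have "s < b\<^sup>2" using zero_le_power2[of b] by linarith
    then show ?thesis by (simp add: phi_sqrt_deriv_def le_max_iff_disj)
  next
    case False
    then show ?thesis using B[of s] phi_sqrt_deriv_eq_0[of s] by (cases "s \<le> a\<^sup>2") auto
  qed
  then show ?thesis by blast
qed

text \<open>The derivatives of \<open>u \<mapsto> phi (sqrt (u\<^sup>2 + c))\<close>, for \<open>c \<ge> 0\<close>.\<close>
definition radial_line_deriv :: "real \<Rightarrow> nat \<Rightarrow> real \<Rightarrow> real" where
  "radial_line_deriv c = chain_deriv [:1:] [:0, 2:] phi_sqrt_deriv (\<lambda>u. u) (\<lambda>u. u\<^sup>2 + c)"

lemma radial_line_deriv_has_real_derivative:
  "(radial_line_deriv c l has_real_derivative radial_line_deriv c (Suc l) u) (at u)"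
  unfolding radial_line_deriv_def
  by (rule chain_deriv_has_real_derivative)
    (auto intro!: derivative_eq_intros phi_sqrt_deriv_has_real_derivative)

lemma radial_line_deriv_bounded: "\<exists>B. \<forall>c u. 0 \<le> c \<longrightarrow> \<bar>radial_line_deriv c l u\<bar> \<le> B"
proof -
  have "\<forall>j. \<exists>M. \<forall>s. \<bar>phi_sqrt_deriv j s\<bar> \<le> M" using phi_sqrt_deriv_bounded by blast
  then obtain M where M: "\<And>j s. \<bar>phi_sqrt_deriv j s\<bar> \<le> M j" by metis
  let ?p = "chain_poly [:1:] [:0, 2:] l"
  have "continuous_on {-a..a} (\<lambda>u. \<Sum>j\<le>l. \<bar>poly (?p j) u\<bar> * M j)"
    by (intro continuous_intros)
  then obtain B where B: "\<And>u. u \<in> {-a..a} \<Longrightarrow> norm (\<Sum>j\<le>l. \<bar>poly (?p j) u\<bar> * M j) \<le> B"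
    using continuous_on_compact_bound[of "{-a..a}"] by blast
  have "\<bar>radial_line_deriv c l u\<bar> \<le> max 0 B" if "0 \<le> c" for c u
  proof (cases "\<bar>u\<bar> \<le> a")
    case True
    have "\<bar>radial_line_deriv c l u\<bar> \<le> (\<Sum>j\<le>l. \<bar>poly (?p j) u * phi_sqrt_deriv j (u\<^sup>2 + c)\<bar>)"
      unfolding radial_line_deriv_def chain_deriv_def by (rule sum_abs)
    also have "\<dots> \<le> (\<Sum>j\<le>l. \<bar>poly (?p j) u\<bar> * M j)"
      by (intro sum_mono) (simp add: abs_mult M mult_left_mono)
    also have "\<dots> \<le> B" using B[of u] True by (auto simp: abs_le_iff)
    finally show ?thesis by simp
  next
    case False
    then have "a\<^sup>2 < u\<^sup>2 + c"
      using that b_pos b_le_a power_strict_mono[of a "\<bar>u\<bar>" 2] by simp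
    then show ?thesis by (simp add: radial_line_deriv_def chain_deriv_def phi_sqrt_deriv_eq_0)
  qed
  then show ?thesis by blast
qed

lemma forward_diff_radial_le:
  "\<exists>B. \<forall>(x::real^'n) i h. 0 \<le> h \<longrightarrow>
     \<bar>forward_diff h l (\<lambda>u. phi (norm (x + u *\<^sub>R axis i 1))) 0\<bar> \<le> h ^ l * B"
proof -
  obtain B where B: "\<And>c u. 0 \<le> c \<Longrightarrow> \<bar>radial_line_deriv c l u\<bar> \<le> B"
    using radial_line_deriv_bounded by blast
  have "\<bar>forward_diff h l (\<lambda>u. phi (norm (x + u *\<^sub>R axis i 1))) 0\<bar> \<le> h ^ l * B"
    if "0 \<le> h" for x :: "real^'n" and i h
  proof -
    define c where "c = (norm x)\<^sup>2 - (x $ i)\<^sup>2"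
    have "0 \<le> c"
      unfolding c_def using component_le_norm_cart[of x i] by (simp add: abs_le_square_iff[symmetric])
    have "phi (norm (x + u *\<^sub>R axis i 1)) = radial_line_deriv c 0 (u + x $ i)" for u
    proof -
      have "phi_sqrt_deriv 0 ((u + x $ i)\<^sup>2 + c) = phi (sqrt ((norm (x + u *\<^sub>R axis i 1))\<^sup>2))"
        unfolding c_def norm_add_axis_power2[symmetric] by (rule phi_sqrt_deriv_0) simp
      then show ?thesis by (simp add: radial_line_deriv_def)
    qed
    then have "forward_diff h l (\<lambda>u. phi (norm (x + u *\<^sub>R axis i 1))) 0
             = forward_diff h l (radial_line_deriv c 0) (x $ i)"
      using forward_diff_translate[of h l "radial_line_deriv c 0" "x $ i" 0] by simp
    also have "\<bar>\<dots>\<bar> \<le> h ^ l * B"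
      by (rule abs_forward_diff_le) (use that \<open>0 \<le> c\<close> B radial_line_deriv_has_real_derivative in auto)
    finally show ?thesis .
  qed
  then show ?thesis by blast
qed

lemma continuous_on_phi_norm: "continuous_on UNIV (\<lambda>x::real^'n. phi (norm x))"
proof -
  have "continuous_on {0..} (D 0)"
    by (rule DERIV_continuous_on[where D="D 1"]) (use D_deriv in auto)
  then show ?thesis
    unfolding D_0 by (rule continuous_on_compose2) (auto intro: continuous_intros)
qed

lemma supported_in_cube_phi_norm: "supported_in_cube pi (\<lambda>x::real^'n. phi (norm x))"
  unfolding supported_in_cube_def mem_cube_iff
proof (intro allI impI)
  fix x :: "real^'n"
  assume "\<not> (\<forall>j. \<bar>x $ j\<bar> \<le> pi)"
  then obtain j where "pi < \<bar>x $ j\<bar>" by (auto simp: not_le)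
  then have "a < norm x" using component_le_norm_cart[of x j] a_le_pi by linarith
  then show "phi (norm x) = 0" by (rule phi_eq_0)
qed

lemma fourier_integral_phi_norm_decay:
  "\<exists>K. \<forall>(m::real^'n) i. 1 \<le> \<bar>m $ i\<bar> \<longrightarrow>
     norm (fourier_integral (\<lambda>x. phi (norm x)) m) \<le> K / \<bar>m $ i\<bar> ^ l"
proof -
  let ?q = "\<lambda>x::real^'n. phi (norm x)"
  obtain B where B: "\<And>(x::real^'n) i h. 0 \<le> h \<Longrightarrow>
      \<bar>forward_diff h l (\<lambda>u. phi (norm (x + u *\<^sub>R axis i 1))) 0\<bar> \<le> h ^ l * B"
    using forward_diff_radial_le by blast
  define V where "V = Henstock_Kurzweil_Integration.content (cube (pi + real l * pi) :: (real^'n) set)"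
  have "norm (fourier_integral ?q m) \<le> (pi / 2) ^ l * B * V / \<bar>m $ i\<bar> ^ l"
    if m: "1 \<le> \<bar>m $ i\<bar>" for m :: "real^'n" and i
  proof -
    define h where "h = pi / \<bar>m $ i\<bar>"
    let ?v = "h *\<^sub>R axis i (1::real)"
    have h: "0 \<le> h" "h \<le> pi" unfolding h_def using m by (auto simp: field_simps)
    have "h * m $ i = pi \<or> h * m $ i = - pi"
      unfolding h_def using m by (cases "m $ i > 0") auto
    then have "cis (m \<bullet> ?v) = -1" by (auto simp: inner_axis complex_eq_iff mult.commute)
    then have FT: "fourier_integral (forward_diff ?v l ?q) m = (-2) ^ l * fourier_integral ?q m"
      using fourier_integral_forward_diff[OF continuous_on_phi_norm supported_in_cube_phi_norm, where v="?v"]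
      by simp
    have "infnorm ?v \<le> pi" using infnorm_le_norm[of ?v] h by simp
    then have "supported_in_cube (pi + real l * pi) (forward_diff ?v l ?q)"
      by (intro supported_in_cube_mono[OF supported_in_cube_forward_diff[OF supported_in_cube_phi_norm]])
        (simp add: mult_left_mono)
    moreover have "\<bar>forward_diff ?v l ?q x\<bar> \<le> h ^ l * B" for x
      using B[OF h(1), of x i] by (simp add: forward_diff_along_line)
    ultimately have "norm (fourier_integral (forward_diff ?v l ?q) m) \<le> h ^ l * B * V"
      unfolding V_def
      by (intro norm_fourier_integral_le continuous_on_forward_diff continuous_on_phi_norm)
    then have "2 ^ l * norm (fourier_integral ?q m) \<le> h ^ l * B * V"
      by (simp add: FT norm_mult norm_power)
    then have "norm (fourier_integral ?q m) \<le> h ^ l * B * V / 2 ^ l"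
      by (simp add: le_divide_eq mult.commute)
    also have "\<dots> = (pi / 2) ^ l * B * V / \<bar>m $ i\<bar> ^ l"
      by (simp add: h_def power_divide)
    finally show ?thesis .
  qed
  then show ?thesis by blast
qed

lemma psi_coeff_eq_fourier_integral:
  fixes m :: "real^'n"
  assumes "m \<in> lattice" "m \<noteq> 0"
  shows "psi_coeff phi m = - fourier_integral (\<lambda>x. phi (norm x)) m / (2 * pi) ^ CARD('n)"
proof -
  obtain i where i: "m $ i \<noteq> 0" using assms(2) by (auto simp: vec_eq_iff)
  have wave: "integral (cube pi) (plane_wave m) = 0"
    by (rule integral_cube_plane_wave_eq_0[OF _ i]) (use assms(1) in \<open>auto simp: lattice_def\<close>)
  have phi_int: "((\<lambda>x. of_real (phi (norm x)) * plane_wave m x) has_integral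
      fourier_integral (\<lambda>x. phi (norm x)) m) (cube pi)"
    by (rule has_integral_fourier_integral(1)[OF continuous_on_phi_norm supported_in_cube_phi_norm])
  have int_wave: "plane_wave m integrable_on cube pi"
    by (intro integrable_continuous continuous_on_plane_wave)
  have "integral (cube pi) (\<lambda>x::real^'n. of_real (1 - phi (norm x)) * exp (- \<i> * of_real (m \<bullet> x)))
      = integral (cube pi) (\<lambda>x. plane_wave m x - of_real (phi (norm x)) * plane_wave m x)"
    by (simp add: plane_wave_def algebra_simps)
  also have "\<dots> = integral (cube pi) (plane_wave m)
                 - integral (cube pi) (\<lambda>x. of_real (phi (norm x)) * plane_wave m x)"
    by (rule integral_diff[OF int_wave has_integral_integrable[OF phi_int]])
  also have "\<dots> = - fourier_integral (\<lambda>x. phi (norm x)) m"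
    using wave integral_unique[OF phi_int] by simp
  finally show ?thesis unfolding psi_coeff_def by simp
qed

lemma psi_coeff_decay:
  "\<exists>A\<ge>0. \<forall>m::real^'n. m \<in> lattice \<longrightarrow> norm (psi_coeff phi m) \<le> A / (1 + infnorm m) ^ L"
proof -
  obtain K where K: "\<And>(m::real^'n) i. 1 \<le> \<bar>m $ i\<bar> \<Longrightarrow>
      norm (fourier_integral (\<lambda>x. phi (norm x)) m) \<le> K / \<bar>m $ i\<bar> ^ L"
    using fourier_integral_phi_norm_decay by blast
  define A where "A = max (norm (psi_coeff phi (0::real^'n))) (2 ^ L * \<bar>K\<bar> / (2 * pi) ^ CARD('n))"
  have "norm (psi_coeff phi m) \<le> A / (1 + infnorm m) ^ L" if "m \<in> lattice" for m :: "real^'n"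
  proof (cases "m = 0")
    case True
    then show ?thesis by (simp add: A_def infnorm_0)
  next
    case False
    obtain i where i: "infnorm m = \<bar>m $ i\<bar>" using infnorm_attained_cart by blast
    have "m $ i \<in> \<int>" using \<open>m \<in> lattice\<close> by (auto simp: lattice_def)
    moreover have "m $ i \<noteq> 0" using i False infnorm_eq_0[of m] by auto
    ultimately have m1: "1 \<le> \<bar>m $ i\<bar>" by (rule Ints_nonzero_abs_ge1)
    have "(1 + \<bar>m $ i\<bar>) ^ L \<le> (2 * \<bar>m $ i\<bar>) ^ L"
      using m1 by (intro power_mono) auto
    then have "1 / \<bar>m $ i\<bar> ^ L \<le> 2 ^ L / (1 + \<bar>m $ i\<bar>) ^ L"
      using m1 by (simp add: field_simps power_mult_distrib)
    have "norm (psi_coeff phi m) = norm (fourier_integral (\<lambda>x. phi (norm x)) m) / (2 * pi) ^ CARD('n)"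
      by (simp add: psi_coeff_eq_fourier_integral[OF \<open>m \<in> lattice\<close> False] norm_divide norm_mult norm_power)
    also have "\<dots> \<le> \<bar>K\<bar> * (1 / \<bar>m $ i\<bar> ^ L) / (2 * pi) ^ CARD('n)"
      using K[OF m1] by (intro divide_right_mono) (auto intro: order_trans[OF _ divide_right_mono])
    also have "\<dots> \<le> \<bar>K\<bar> * (2 ^ L / (1 + \<bar>m $ i\<bar>) ^ L) / (2 * pi) ^ CARD('n)"
      by (intro divide_right_mono mult_left_mono \<open>1 / \<bar>m $ i\<bar> ^ L \<le> _\<close>) auto
    also have "\<dots> = (2 ^ L * \<bar>K\<bar> / (2 * pi) ^ CARD('n)) / (1 + infnorm m) ^ L"
      by (simp add: i mult_ac)
    also have "\<dots> \<le> A / (1 + infnorm m) ^ L"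
      unfolding A_def by (intro divide_right_mono) (auto simp: infnorm_pos_le)
    finally show ?thesis .
  qed
  moreover have "0 \<le> A" by (simp add: A_def le_max_iff_disj)
  ultimately show ?thesis by blast
qed

end

section \<open>Sums of Theta coefficients over a shell\<close>

lemma sum_norm_Theta_coeff_le:
  fixes n :: "real^'n"
  defines "S \<equiv> \<lambda>j. {m \<in> lattice. (norm (n - m))\<^sup>2 = real j}"
  assumes "finite J" "finite (\<Union>j\<in>J. S j)"
  shows "(\<Sum>j\<in>J. norm (Theta_coeff phi j n))
       \<le> (\<Sum>m\<in>(\<Union>j\<in>J. S j). norm (psi_coeff phi m)) / (2 * pi) ^ CARD('n)"
proof -
  have "norm (Theta_coeff phi j n) = norm (\<Sum>m\<in>S j. psi_coeff phi m) / (2 * pi) ^ CARD('n)" for j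
    unfolding Theta_coeff_def S_def by (simp add: norm_mult norm_divide norm_power)
  then have "(\<Sum>j\<in>J. norm (Theta_coeff phi j n)) \<le> (\<Sum>j\<in>J. (\<Sum>m\<in>S j. norm (psi_coeff phi m)) / (2 * pi) ^ CARD('n))"
    by (intro sum_mono) (simp add: norm_sum divide_right_mono)
  also have "\<dots> = (\<Sum>m\<in>(\<Union>j\<in>J. S j). norm (psi_coeff phi m)) / (2 * pi) ^ CARD('n)"
    using assms(2,3)
    by (subst sum.UNION_disjoint) (auto simp: S_def sum_divide_distrib intro: finite_subset)
  finally show ?thesis .
qed

lemma sum_norm_Theta_coeff_shell_le:
  fixes phi :: "real \<Rightarrow> real" and n :: "real^'n" and k :: nat
  assumes "0 \<le> A"
    and decay: "\<And>m::real^'n. m \<in> lattice \<Longrightarrow> norm (psi_coeff phi m) \<le> A / (1 + infnorm m) ^ (l + 2 * CARD('n))"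
  shows "(\<Sum>j \<in> {j. real k \<le> sqrt (real j) \<and> sqrt (real j) < real k + 1}. norm (Theta_coeff phi j n))
       \<le> A * (sqrt CARD('n) + 2) ^ l * 3 ^ CARD('n) / (2 * pi) ^ CARD('n) / (1 + \<bar>norm n - real k\<bar>) ^ l"
proof -
  define J where "J = {j. real k \<le> sqrt (real j) \<and> sqrt (real j) < real k + 1}"
  define U where "U = (\<Union>j\<in>J. {m \<in> lattice. (norm (n - m))\<^sup>2 = real j})"
  define d where "d = \<bar>norm n - real k\<bar>"
  define \<gamma> where "\<gamma> = sqrt CARD('n) + 2"
  have "finite J" unfolding J_def by (rule finite_sqrt_shell)
  have shell: "real k \<le> norm (n - m) \<and> norm (n - m) < real k + 1" if m: "m \<in> U" for m
  proof -
    obtain j where "j \<in> J" "(norm (n - m))\<^sup>2 = real j" using m by (auto simp: U_def)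
    then have "norm (n - m) = sqrt (real j)" using real_sqrt_unique[of "norm (n - m)" "real j"] by simp
    then show ?thesis using \<open>j \<in> J\<close> by (simp add: J_def)
  qed
  have "infnorm m \<le> real (nat \<lceil>norm n + real k + 1\<rceil>)" if "m \<in> U" for m
  proof -
    have "infnorm m \<le> norm n + real k + 1" using shell[OF that] by (intro shell_infnorm_bounds(2)) auto
    then show ?thesis using real_nat_ceiling_ge[of "norm n + real k + 1"] by linarith
  qed
  moreover have "U \<subseteq> lattice" by (auto simp: U_def)
  ultimately have "finite U" and weights: "(\<Sum>m\<in>U. lattice_weight m) \<le> 3 ^ CARD('n)"
    using lattice_weight_sum_le by blast+
  have psi: "norm (psi_coeff phi m) \<le> A * \<gamma> ^ l / (1 + d) ^ l * lattice_weight m" if "m \<in> U" for m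
  proof -
    have "1 + d \<le> \<gamma> * (1 + infnorm m)"
      unfolding d_def \<gamma>_def using shell[OF that] by (intro shell_infnorm_bounds(1)) auto
    have "m \<in> lattice" using that by (auto simp: U_def)
    then have "norm (psi_coeff phi m) \<le> A / (1 + infnorm m) ^ (l + 2 * CARD('n))" by (rule decay)
    also have "\<dots> \<le> A * \<gamma> ^ l / (1 + d) ^ l * lattice_weight m"
      by (rule power_decay_le_lattice_weight) (use \<open>0 \<le> A\<close> \<open>1 + d \<le> _\<close> in \<open>auto simp: d_def\<close>)
    finally show ?thesis .
  qed
  have "(\<Sum>j\<in>J. norm (Theta_coeff phi j n)) \<le> (\<Sum>m\<in>U. norm (psi_coeff phi m)) / (2 * pi) ^ CARD('n)"
    unfolding U_def by (rule sum_norm_Theta_coeff_le) (use \<open>finite J\<close> \<open>finite U\<close> in \<open>simp_all add: U_def\<close>)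
  also have "\<dots> \<le> (\<Sum>m\<in>U. A * \<gamma> ^ l / (1 + d) ^ l * lattice_weight m) / (2 * pi) ^ CARD('n)"
    by (intro divide_right_mono sum_mono psi) auto
  also have "\<dots> = A * \<gamma> ^ l / (1 + d) ^ l * (\<Sum>m\<in>U. lattice_weight m) / (2 * pi) ^ CARD('n)"
    by (simp add: sum_distrib_left)
  also have "\<dots> \<le> A * \<gamma> ^ l / (1 + d) ^ l * 3 ^ CARD('n) / (2 * pi) ^ CARD('n)"
    using weights \<open>0 \<le> A\<close> by (intro divide_right_mono mult_left_mono) (auto simp: d_def \<gamma>_def)
  also have "\<dots> = A * \<gamma> ^ l * 3 ^ CARD('n) / (2 * pi) ^ CARD('n) / (1 + d) ^ l"
    by (simp add: field_simps)
  finally show ?thesis by (simp add: J_def d_def \<gamma>_def)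
qed

lemma sum_power2_Theta_coeff_shell_le:
  fixes phi :: "real \<Rightarrow> real" and n :: "real^'n" and k :: nat
  assumes "0 \<le> A"
    and decay: "\<And>m::real^'n. m \<in> lattice \<Longrightarrow> norm (psi_coeff phi m) \<le> A / (1 + infnorm m) ^ (l + 2 * CARD('n))"
  shows "(\<Sum>j \<in> {j. real k \<le> sqrt (real j) \<and> sqrt (real j) < real k + 1}. (norm (Theta_coeff phi j n))\<^sup>2)
       \<le> (A * (sqrt CARD('n) + 2) ^ l * 3 ^ CARD('n) / (2 * pi) ^ CARD('n))\<^sup>2 / (1 + \<bar>norm n - real k\<bar>) ^ l"
proof -
  define C where "C = A * (sqrt CARD('n) + 2) ^ l * 3 ^ CARD('n) / (2 * pi) ^ CARD('n)"
  let ?J = "{j. real k \<le> sqrt (real j) \<and> sqrt (real j) < real k + 1}"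
  let ?d = "1 + \<bar>norm n - real k\<bar>"
  have "(\<Sum>j\<in>?J. (norm (Theta_coeff phi j n))\<^sup>2) \<le> (\<Sum>j\<in>?J. norm (Theta_coeff phi j n))\<^sup>2"
    by (rule sum_power2_le_power2_sum) simp
  also have "\<dots> \<le> (C / ?d ^ l)\<^sup>2"
    using sum_norm_Theta_coeff_shell_le[OF assms, where k=k and n=n]
    by (intro power_mono) (simp_all add: C_def sum_nonneg)
  also have "\<dots> = C\<^sup>2 / (?d ^ l)\<^sup>2" by (rule power_divide)
  also have "\<dots> \<le> C\<^sup>2 / ?d ^ l"
  proof (rule divide_left_mono)
    have "1 \<le> ?d ^ l" by simp
    then show "?d ^ l \<le> (?d ^ l)\<^sup>2" by (simp add: power2_eq_square)
  qed auto
  finally show ?thesis unfolding C_def .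
qed

lemma radial_cutoff_from_chi_bounds:
  assumes rR: "0 < r" "r < R" "R \<le> pi"
    and smooth: "smooth_on_nonneg phi1"
    and lower: "\<And>t. 0 \<le> t \<Longrightarrow> chi ((R - r) / 3) t \<le> phi1 t"
    and upper: "\<And>t. 0 \<le> t \<Longrightarrow> phi1 t \<le> chi (2 * (R - r) / 3) t"
  obtains D where "radial_cutoff phi1 (2 * (R - r) / 3) ((R - r) / 3) D"
proof -
  obtain D where "D 0 = phi1" "\<And>k x. 0 \<le> x \<Longrightarrow> (D k has_real_derivative D (Suc k) x) (at x within {0..})"
    using smooth unfolding smooth_on_nonneg_def by blast
  then have "radial_cutoff phi1 (2 * (R - r) / 3) ((R - r) / 3) D"
  proof unfold_locales
    show "0 < (R - r) / 3" "2 * (R - r) / 3 \<le> pi" using rR by auto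
    show "phi1 t = 1" if "0 \<le> t" "t \<le> (R - r) / 3" for t
      using lower[of t] upper[of t] that rR by (auto simp: chi_def)
    show "phi1 t = 0" if "2 * (R - r) / 3 < t" for t
      using lower[of t] upper[of t] that rR by (auto simp: chi_def)
  qed
  then show ?thesis by (rule that)
qed

theorem lemma2:
  fixes phi1 :: "real \<Rightarrow> real" and r R :: real
  assumes N2: "CARD('n::finite) \<ge> 2"
    and rR: "0 < r" "r < R" "R \<le> pi"
    and smooth: "smooth_on_nonneg phi1"
    and lower: "\<And>t. 0 \<le> t \<Longrightarrow> chi ((R - r) / 3) t \<le> phi1 t"
    and upper: "\<And>t. 0 \<le> t \<Longrightarrow> phi1 t \<le> chi (2 * (R - r) / 3) t"
  shows "\<forall>l::nat. \<exists>C::real. \<forall>(k::nat) (n::real^'n). n \<in> lattice \<longrightarrow>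
           (\<Sum>j \<in> {j::nat. real k \<le> sqrt (real j) \<and> sqrt (real j) < real k + 1}.
              (cmod (Theta_coeff phi1 j n :: complex))\<^sup>2)
           \<le> C / (1 + \<bar>norm n - real k\<bar>) ^ l"
proof
  fix l :: nat
  obtain D where "radial_cutoff phi1 (2 * (R - r) / 3) ((R - r) / 3) D"
    using radial_cutoff_from_chi_bounds[OF rR smooth lower upper] .
  then obtain A where "0 \<le> A"
    and "\<forall>m::real^'n. m \<in> lattice \<longrightarrow> norm (psi_coeff phi1 m) \<le> A / (1 + infnorm m) ^ (l + 2 * CARD('n))"
    using radial_cutoff.psi_coeff_decay by blast
  then show "\<exists>C. \<forall>k (n::real^'n). n \<in> lattice \<longrightarrow>
      (\<Sum>j \<in> {j. real k \<le> sqrt (real j) \<and> sqrt (real j) < real k + 1}. (cmod (Theta_coeff phi1 j n))\<^sup>2)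
      \<le> C / (1 + \<bar>norm n - real k\<bar>) ^ l"
    using sum_power2_Theta_coeff_shell_le by blast
qed

end
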